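(* Let $M\ge 1$ and let $dq(z)=q(z)\,dz$ be a positive Radon measure on $\mathbb{R}^M$ with density $q\ge 0$ satisfying $$\int_{|z|<1}|z|^{\gamma}\,dq(z)+\int_{|z|\ge 1}|z|^{\gamma-1}\,dq(z)<\infty$$ for $\gamma=2$ or $\gamma=1$. Assume condition (A) holds, with exponent $\alpha\in(0,2)$, set $S_0\subset S=\mathrm{supp}(dq)$ and function $q_0$ as described in the context. Then: (1) $S_0$ is a positive cone: $sS_0\subset S_0$ for all $s>0$; (2) $s^{M+\alpha}q_0(sz)=q_0(z)$ for all $s>0$ and all $z\in S_0$; (3) there is a bounded real-valued function $\overline{q}_0$ on the unit sphere of $\mathbb{R}^M$ such that $q_0(z)=|z|^{-(M+\alpha)}\,\overline{q}_0\!\left(\frac{z}{|z|}\right)$ for all $z\in\mathbb{R}^M\setminus\{0\}$.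
   Context: Condition (A): there exists a constant $\alpha\in(0,2)$ and a constant $C_1>0$ (independent of $\varepsilon$) such that $\varepsilon^{M+\alpha}q(\varepsilon z)\le C_1|z|^{-(M+\alpha)}$ for all $\varepsilon\in(0,1)$ and all $z\in\mathbb{R}^M$; and there exist a subset $S_0\subset S=\mathrm{supp}(dq)$ and a positive function $q_0$ on $S_0$ such that $\lim_{\varepsilon\downarrow 0}\varepsilon^{M+\alpha}q(\varepsilon z)=q_0(z)$ for all $z\in S_0$ and $\lim_{\varepsilon\downarrow 0}\varepsilon^{M+\alpha}q(\varepsilon z)=0$ for all $z\in\mathbb{R}^M\setminus S_0$. The function $q_0$ is extended by $0$ outside $S_0$. *)

theory Defs
  imports "HOL-Analysis.Analysis"
begin

definition measure_support :: "'a::topological_space measure \<Rightarrow> 'a set" where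
  "measure_support N = {x. \<forall>U. open U \<longrightarrow> x \<in> U \<longrightarrow> U \<in> sets N \<longrightarrow> emeasure N U > 0}"

end

theory Submission
  imports Defs
begin

text \<open>\<open>q\<^sub>0\<close> is the blow-up limit of \<open>\<epsilon>\<^bsup>M+\<alpha>\<^esup> q(\<epsilon> z)\<close> as \<open>\<epsilon> \<down> 0\<close>.
  Replacing \<open>z\<close> by \<open>s z\<close> merely rescales \<open>\<epsilon>\<close> by \<open>s\<close>, so the limit is homogeneous of
  degree \<open>-(M+\<alpha>)\<close>; this gives (2), and (1) because \<open>S\<^sub>0\<close> is exactly where \<open>q\<^sub>0 > 0\<close>.
  Homogeneity yields the polar form (3) with \<open>q\<^sub>0\<close> itself as angular part, which is
  bounded on the sphere by \<open>C\<^sub>1\<close> (pass to the limit in the bound of (A) at \<open>|z| = 1\<close>)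
  and by \<open>0\<close> from below.\<close>

lemma blow_up_limit_homogeneous:
  fixes g L :: "'a::real_vector \<Rightarrow> real"
  assumes lim_z: "((\<lambda>\<epsilon>. \<epsilon> powr N * g (\<epsilon> *\<^sub>R z)) \<longlongrightarrow> L z) (at_right 0)"
    and lim_sz: "((\<lambda>\<epsilon>. \<epsilon> powr N * g (\<epsilon> *\<^sub>R (s *\<^sub>R z))) \<longlongrightarrow> L (s *\<^sub>R z)) (at_right 0)"
    and s: "s > 0"
  shows "s powr N * L (s *\<^sub>R z) = L z"
proof -
  have "filterlim (\<lambda>\<epsilon>. s * \<epsilon>) (at_right 0) (at_right 0)"
    using filterlim_times_pos[OF filterlim_ident s, of 0] by simp
  from filterlim_compose[OF lim_z this]
  have "((\<lambda>\<epsilon>. (s * \<epsilon>) powr N * g ((s * \<epsilon>) *\<^sub>R z)) \<longlongrightarrow> L z) (at_right 0)" .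
  moreover have "(s * \<epsilon>) powr N * g ((s * \<epsilon>) *\<^sub>R z) = s powr N * (\<epsilon> powr N * g (\<epsilon> *\<^sub>R (s *\<^sub>R z)))"
    if "\<epsilon> > 0" for \<epsilon>
    using that s by (simp add: powr_mult mult.commute)
  ultimately have "((\<lambda>\<epsilon>. s powr N * (\<epsilon> powr N * g (\<epsilon> *\<^sub>R (s *\<^sub>R z)))) \<longlongrightarrow> L z) (at_right 0)"
    by (elim Lim_transform_eventually) (auto intro: eventually_mono[OF eventually_at_right_less])
  moreover have "((\<lambda>\<epsilon>. s powr N * (\<epsilon> powr N * g (\<epsilon> *\<^sub>R (s *\<^sub>R z)))) \<longlongrightarrow> s powr N * L (s *\<^sub>R z))
      (at_right 0)"
    using lim_sz by (intro tendsto_mult_left)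
  ultimately show ?thesis
    using tendsto_unique[OF trivial_limit_at_right_real] by blast
qed

lemma blow_up_limit_le:
  fixes g L :: "'a::real_vector \<Rightarrow> real"
  assumes lim: "((\<lambda>\<epsilon>. \<epsilon> powr N * g (\<epsilon> *\<^sub>R z)) \<longlongrightarrow> L z) (at_right 0)"
    and bound: "\<And>\<epsilon>. 0 < \<epsilon> \<Longrightarrow> \<epsilon> < 1 \<Longrightarrow> \<epsilon> powr N * g (\<epsilon> *\<^sub>R z) \<le> C"
  shows "L z \<le> C"
proof (rule tendsto_upperbound[OF lim _ trivial_limit_at_right_real])
  show "\<forall>\<^sub>F \<epsilon> in at_right 0. \<epsilon> powr N * g (\<epsilon> *\<^sub>R z) \<le> C"
    using bound by (auto simp: eventually_at_right[of 0 1] intro!: exI[of _ 1])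
qed

lemma homogeneous_polar_form:
  fixes L :: "'a::real_normed_vector \<Rightarrow> real"
  assumes hom: "\<And>s z. s > 0 \<Longrightarrow> s powr N * L (s *\<^sub>R z) = L z"
    and "z \<noteq> 0"
  shows "L z = norm z powr (- N) * L (z /\<^sub>R norm z)"
proof -
  have "norm z powr N * L z = L (z /\<^sub>R norm z)"
    using hom[of "norm z" "z /\<^sub>R norm z"] \<open>z \<noteq> 0\<close> by simp
  then show ?thesis
    using \<open>z \<noteq> 0\<close> by (simp add: powr_minus field_simps)
qed

lemma homogeneous_positive_set_scaleR:
  fixes L :: "'a::real_vector \<Rightarrow> real"
  assumes hom: "\<And>s z. s > 0 \<Longrightarrow> s powr N * L (s *\<^sub>R z) = L z"
    and s: "s > 0"
  shows "(\<lambda>z. s *\<^sub>R z) ` {z. L z > 0} \<subseteq> {z. L z > 0}"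
proof clarify
  fix z assume "L z > 0"
  then have "s powr N * L (s *\<^sub>R z) > 0"
    using hom[OF s] by simp
  then show "L (s *\<^sub>R z) > 0"
    using s by (simp add: zero_less_mult_iff)
qed

theorem lemma1p1:
  fixes q q0 :: "'a::euclidean_space \<Rightarrow> real"
    and S0 :: "'a set"
    and \<alpha> C1 :: real
    and \<gamma> :: nat
  assumes q_meas: "q \<in> borel_measurable borel"
    and q_nonneg: "\<And>z. q z \<ge> 0"
    and gamma: "\<gamma> = 1 \<or> \<gamma> = 2"
    and int_small: "set_integrable lborel {z. norm z < 1} (\<lambda>z. norm z ^ \<gamma> * q z)"
    and int_large: "set_integrable lborel {z. norm z \<ge> 1} (\<lambda>z. norm z ^ (\<gamma> - 1) * q z)"
    and alpha: "0 < \<alpha>" "\<alpha> < 2"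
    and C1_pos: "C1 > 0"
    and A_bound: "\<And>\<epsilon> z. 0 < \<epsilon> \<Longrightarrow> \<epsilon> < 1 \<Longrightarrow> z \<noteq> 0 \<Longrightarrow>
        \<epsilon> powr (real DIM('a) + \<alpha>) * q (\<epsilon> *\<^sub>R z) \<le> C1 * norm z powr (- (real DIM('a) + \<alpha>))"
    and S0_sub: "S0 \<subseteq> measure_support (density lborel (\<lambda>z. ennreal (q z)))"
    and q0_pos: "\<And>z. z \<in> S0 \<Longrightarrow> q0 z > 0"
    and A_lim_in: "\<And>z. z \<in> S0 \<Longrightarrow>
        ((\<lambda>\<epsilon>. \<epsilon> powr (real DIM('a) + \<alpha>) * q (\<epsilon> *\<^sub>R z)) \<longlongrightarrow> q0 z) (at_right 0)"
    and A_lim_out: "\<And>z. z \<notin> S0 \<Longrightarrow>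
        ((\<lambda>\<epsilon>. \<epsilon> powr (real DIM('a) + \<alpha>) * q (\<epsilon> *\<^sub>R z)) \<longlongrightarrow> 0) (at_right 0)"
    and q0_ext: "\<And>z. z \<notin> S0 \<Longrightarrow> q0 z = 0"
  shows "(\<forall>s>0. (\<lambda>z. s *\<^sub>R z) ` S0 \<subseteq> S0)
    \<and> (\<forall>s>0. \<forall>z\<in>S0. s powr (real DIM('a) + \<alpha>) * q0 (s *\<^sub>R z) = q0 z)
    \<and> (\<exists>qb :: 'a \<Rightarrow> real. bounded (qb ` sphere 0 1) \<and>
         (\<forall>z. z \<noteq> 0 \<longrightarrow> q0 z = norm z powr (- (real DIM('a) + \<alpha>)) * qb (z /\<^sub>R norm z)))"
proof -
  define N where "N = real DIM('a) + \<alpha>"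
  have lim: "((\<lambda>\<epsilon>. \<epsilon> powr N * q (\<epsilon> *\<^sub>R z)) \<longlongrightarrow> q0 z) (at_right 0)" for z
    using A_lim_in[of z] A_lim_out[of z] q0_ext[of z] unfolding N_def by (cases "z \<in> S0") auto
  have hom: "s powr N * q0 (s *\<^sub>R z) = q0 z" if "s > 0" for s z
    using blow_up_limit_homogeneous[OF lim lim that] .
  have S0_eq: "S0 = {z. q0 z > 0}"
    using q0_pos q0_ext by force
  have cone: "\<forall>s>0. (\<lambda>z. s *\<^sub>R z) ` S0 \<subseteq> S0"
    unfolding S0_eq using homogeneous_positive_set_scaleR[OF hom] by blast
  have "\<bar>q0 u\<bar> \<le> C1" if "norm u = 1" for u
  proof -
    have "u \<noteq> 0" using that by auto
    then have "q0 u \<le> C1"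
      using that by (intro blow_up_limit_le[OF lim]) (use A_bound[of _ u] in \<open>simp add: N_def\<close>)
    moreover have "q0 u \<ge> 0"
      using q0_pos[of u] q0_ext[of u] by (cases "u \<in> S0") auto
    ultimately show ?thesis by simp
  qed
  then have "bounded (q0 ` sphere 0 1)"
    unfolding bounded_iff by (intro exI[of _ C1]) auto
  moreover have "q0 z = norm z powr (- N) * q0 (z /\<^sub>R norm z)" if "z \<noteq> 0" for z
    using homogeneous_polar_form[OF hom that] by blast
  ultimately show ?thesis
    using cone hom unfolding N_def by blast
qed

end
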